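(* Consider coordination games in which every player has strategy set $\{1,2\}$, with solution set $\mathrm{NE}$ (pure Nash equilibria). (1) If $G$ is a cycle on $n\ge4$ nodes, then $ST(\mathrm{NE})\setminus\mathrm{NE}\neq\emptyset$; moreover, if $n$ is even, there is $s\in ST(\mathrm{NE})\setminus\mathrm{NE}$ with $\mathrm{sw}(s)=|E|-|N|\,(=0)$. (2) If $G$ is the complete graph on $n$ nodes, then $ST(\mathrm{NE})\setminus\mathrm{NE}\neq\emptyset$ if and only if $n$ is even. (3) If $G$ is a forest with at least one edge, then $ST(\mathrm{NE})\setminus\mathrm{NE}\neq\emptyset$.
   Context: The coordination game on a finite simple undirected graph $G=(N,E)$: players are nodes, each chooses $s_i\in\{1,2\}$, and $u_i(s)$ is the number of neighbours $j$ of $i$ with $s_j=s_i$; $\mathrm{sw}(s)=\sum_iu_i(s)$. For a solution set $D$, a transition is a profile $t$ such that for each $i$ there is $d\in D$ with $t_i=d_i$. $\mathrm{BR}_i(s_{-i})$ is the set of best responses of $i$. A stable transition is a transition $s$ such that for every $i$ with $s_i\notin\mathrm{BR}_i(s_{-i})$ there is $j\neq i$ with $s_j\notin\mathrm{BR}_j(s_{-j})$ and some $\hat s_j\in\mathrm{BR}_j(s_{-j})$ with $s_i\in\mathrm{BR}_i(\hat s_j,s_{-\{i,j\}})$; $ST(D)$ denotes the set of stable transitions. *)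

theory Defs
  imports Main "HOL-Library.FuncSet"
begin

text \<open>Coordination game on a finite simple undirected graph with vertex set V and
adjacency relation E. Strategies are 1 and 2; a profile assigns a strategy to
every node of V (and is undefined outside V).\<close>

definition simple_graph :: "'a set \<Rightarrow> ('a \<Rightarrow> 'a \<Rightarrow> bool) \<Rightarrow> bool" where
  "simple_graph V E \<longleftrightarrow> finite V \<and> (\<forall>i j. E i j \<longrightarrow> i \<in> V \<and> j \<in> V)
     \<and> (\<forall>i j. E i j \<longrightarrow> E j i) \<and> (\<forall>i. \<not> E i i)"

definition edges :: "'a set \<Rightarrow> ('a \<Rightarrow> 'a \<Rightarrow> bool) \<Rightarrow> 'a set set" where
  "edges V E = {{i, j} | i j. i \<in> V \<and> j \<in> V \<and> E i j}"

definition profiles :: "'a set \<Rightarrow> ('a \<Rightarrow> nat) set" where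
  "profiles V = V \<rightarrow>\<^sub>E {1, 2}"

definition util :: "'a set \<Rightarrow> ('a \<Rightarrow> 'a \<Rightarrow> bool) \<Rightarrow> 'a \<Rightarrow> ('a \<Rightarrow> nat) \<Rightarrow> nat" where
  "util V E i s = card {j \<in> V. E i j \<and> s j = s i}"

definition sw :: "'a set \<Rightarrow> ('a \<Rightarrow> 'a \<Rightarrow> bool) \<Rightarrow> ('a \<Rightarrow> nat) \<Rightarrow> nat" where
  "sw V E s = (\<Sum>i\<in>V. util V E i s)"

text \<open>Best responses of i to s_{-i} (the value s i is irrelevant).\<close>
definition BR :: "'a set \<Rightarrow> ('a \<Rightarrow> 'a \<Rightarrow> bool) \<Rightarrow> 'a \<Rightarrow> ('a \<Rightarrow> nat) \<Rightarrow> nat set" where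
  "BR V E i s = {x \<in> {1, 2}. \<forall>y \<in> {1, 2}. util V E i (s(i := y)) \<le> util V E i (s(i := x))}"

definition NE :: "'a set \<Rightarrow> ('a \<Rightarrow> 'a \<Rightarrow> bool) \<Rightarrow> ('a \<Rightarrow> nat) set" where
  "NE V E = {s \<in> profiles V. \<forall>i \<in> V. s i \<in> BR V E i s}"

definition is_transition :: "'a set \<Rightarrow> ('a \<Rightarrow> nat) set \<Rightarrow> ('a \<Rightarrow> nat) \<Rightarrow> bool" where
  "is_transition V D t \<longleftrightarrow> t \<in> profiles V \<and> (\<forall>i \<in> V. \<exists>d \<in> D. t i = d i)"

definition ST :: "'a set \<Rightarrow> ('a \<Rightarrow> 'a \<Rightarrow> bool) \<Rightarrow> ('a \<Rightarrow> nat) set \<Rightarrow> ('a \<Rightarrow> nat) set" where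
  "ST V E D = {s. is_transition V D s \<and>
     (\<forall>i \<in> V. s i \<notin> BR V E i s \<longrightarrow>
        (\<exists>j \<in> V. j \<noteq> i \<and> s j \<notin> BR V E j s \<and>
           (\<exists>x \<in> BR V E j s. s i \<in> BR V E i (s(j := x)))))}"

definition cycle_adj :: "nat \<Rightarrow> nat \<Rightarrow> nat \<Rightarrow> bool" where
  "cycle_adj n i j \<longleftrightarrow> i < n \<and> j < n \<and> (j = (i + 1) mod n \<or> i = (j + 1) mod n)"

definition complete_adj :: "nat \<Rightarrow> nat \<Rightarrow> nat \<Rightarrow> bool" where
  "complete_adj n i j \<longleftrightarrow> i < n \<and> j < n \<and> i \<noteq> j"

definition has_cycle :: "'a set \<Rightarrow> ('a \<Rightarrow> 'a \<Rightarrow> bool) \<Rightarrow> bool" where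
  "has_cycle V E \<longleftrightarrow> (\<exists>vs. length vs \<ge> 3 \<and> distinct vs \<and> set vs \<subseteq> V \<and>
      (\<forall>k < length vs. E (vs ! k) (vs ! ((k + 1) mod length vs))))"

definition forest :: "'a set \<Rightarrow> ('a \<Rightarrow> 'a \<Rightarrow> bool) \<Rightarrow> bool" where
  "forest V E \<longleftrightarrow> simple_graph V E \<and> \<not> has_cycle V E"

end

theory Submission
  imports Defs
begin

text \<open>
  Every profile is a transition of NE, because both constant profiles are equilibria. Hence a
  profile is a stable transition iff every unhappy player i has an unhappy neighbour j playing
  the other strategy whose switch to the strategy of i makes i content; as i then gains one
  agreeing and loses one disagreeing neighbour, this means i is outvoted by at most 2.

  On a cycle, alternate the two strategies (for odd n the last two nodes both play 2): every
  unhappy node has an unhappy neighbour, and for even n no node agrees with a neighbour, so the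
  welfare is 0. On a complete graph an unhappy player and an unhappy player of the other
  strategy force both strategy classes to have the same size, so n is even; conversely the
  half-half split works. In a forest, the second node x of a longest path has a pendant
  neighbour and at most one neighbour that is not pendant; letting x and suitably many of its
  pendant neighbours disagree makes exactly these nodes unhappy, and they rescue each other.
\<close>

section \<open>Best responses and stable transitions\<close>

definition count_nbrs :: "'a set \<Rightarrow> ('a \<Rightarrow> 'a \<Rightarrow> bool) \<Rightarrow> ('a \<Rightarrow> nat) \<Rightarrow> 'a \<Rightarrow> nat \<Rightarrow> nat" where
  "count_nbrs V E s i a = card {j \<in> V. E i j \<and> s j = a}"

definition unhappy :: "'a set \<Rightarrow> ('a \<Rightarrow> 'a \<Rightarrow> bool) \<Rightarrow> ('a \<Rightarrow> nat) \<Rightarrow> 'a \<Rightarrow> bool" where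
  "unhappy V E s i \<longleftrightarrow> count_nbrs V E s i (s i) < count_nbrs V E s i (3 - s i)"

lemma util_eq_count_nbrs: "util V E i s = count_nbrs V E s i (s i)"
  unfolding util_def count_nbrs_def ..

lemma util_fun_upd_self: "\<not> E i i \<Longrightarrow> util V E i (s(i := a)) = count_nbrs V E s i a"
  unfolding util_def count_nbrs_def by (rule arg_cong[where f = card]) auto

lemma mem_BR_iff:
  assumes "\<not> E i i" "a \<in> {1, 2}"
  shows "a \<in> BR V E i s \<longleftrightarrow> count_nbrs V E s i (3 - a) \<le> count_nbrs V E s i a"
proof -
  have "{1, 2} = {a, 3 - a}" using assms(2) by auto
  then show ?thesis using assms unfolding BR_def by (auto simp: util_fun_upd_self)
qed

lemma not_mem_BR_iff_unhappy:
  assumes "\<not> E i i" "s i \<in> {1, 2}"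
  shows "s i \<notin> BR V E i s \<longleftrightarrow> unhappy V E s i"
  using mem_BR_iff[where E = E and i = i, OF assms] unfolding unhappy_def by auto

lemma BR_unhappy:
  assumes "\<not> E i i" "s i \<in> {1, 2}" "unhappy V E s i"
  shows "BR V E i s = {3 - s i}"
proof -
  have "BR V E i s \<subseteq> {s i, 3 - s i}" using assms(2) unfolding BR_def by auto
  moreover have "3 - s i \<in> BR V E i s"
    using mem_BR_iff[where E = E and i = i and a = "3 - s i", OF assms(1)] assms(2,3) unfolding unhappy_def by auto
  ultimately show ?thesis using not_mem_BR_iff_unhappy[where E = E and i = i and s = s, OF assms(1,2)] assms(3) by auto
qed

lemma count_nbrs_fun_upd_nonadj: "\<not> E i j \<Longrightarrow> count_nbrs V E (s(j := b)) i a = count_nbrs V E s i a"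
  unfolding count_nbrs_def by (rule arg_cong[where f = card]) auto

lemma count_nbrs_fun_upd_adj:
  assumes "finite V" "j \<in> V" "E i j"
  shows "count_nbrs V E (s(j := b)) i a + of_bool (s j = a) = count_nbrs V E s i a + of_bool (b = a)"
proof -
  let ?S = "{k \<in> V. E i k \<and> k \<noteq> j \<and> s k = a}"
  have "{k \<in> V. E i k \<and> (s(j := b)) k = a} = (if b = a then insert j ?S else ?S)"
    and "{k \<in> V. E i k \<and> s k = a} = (if s j = a then insert j ?S else ?S)"
    using assms by auto
  moreover have "finite ?S" "j \<notin> ?S" using assms(1) by auto
  ultimately show ?thesis unfolding count_nbrs_def by simp
qed

lemma profiles_value: "s \<in> profiles V \<Longrightarrow> i \<in> V \<Longrightarrow> s i \<in> {1, 2}"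
  unfolding profiles_def by auto

lemma restrict_in_profiles: "(\<And>i. i \<in> V \<Longrightarrow> f i \<in> {1, 2}) \<Longrightarrow> restrict f V \<in> profiles V"
  unfolding profiles_def by auto

lemma NE_iff_no_unhappy:
  assumes "simple_graph V E" "s \<in> profiles V"
  shows "s \<in> NE V E \<longleftrightarrow> (\<forall>i\<in>V. \<not> unhappy V E s i)"
proof -
  have "s i \<in> BR V E i s \<longleftrightarrow> \<not> unhappy V E s i" if "i \<in> V" for i
    using assms not_mem_BR_iff_unhappy[where E = E and i = i and s = s] profiles_value[OF assms(2) that]
    unfolding simple_graph_def by blast
  then show ?thesis using assms(2) unfolding NE_def by blast
qed

lemma constant_profile_in_NE:
  assumes "simple_graph V E" "a \<in> {1, 2}"
  shows "restrict (\<lambda>_. a) V \<in> NE V E"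
proof -
  let ?s = "restrict (\<lambda>_. a) V"
  have "count_nbrs V E ?s i (3 - a) = 0" for i
    unfolding count_nbrs_def using assms(2) by auto
  then have "\<not> unhappy V E ?s i" if "i \<in> V" for i
    using that unfolding unhappy_def by simp
  moreover have "?s \<in> profiles V" using assms(2) by (intro restrict_in_profiles)
  ultimately show ?thesis using NE_iff_no_unhappy[OF assms(1)] by blast
qed

lemma is_transition_NE:
  assumes "simple_graph V E" "s \<in> profiles V"
  shows "is_transition V (NE V E) s"
  unfolding is_transition_def
proof (intro conjI ballI)
  fix i assume "i \<in> V"
  then have "restrict (\<lambda>_. s i) V \<in> NE V E"
    using constant_profile_in_NE[OF assms(1) profiles_value[OF assms(2)]] by blast
  then show "\<exists>d\<in>NE V E. s i = d i" using \<open>i \<in> V\<close> by (intro bexI) simp_all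
qed (fact assms(2))

lemma BR_after_switch_iff:
  assumes graph: "simple_graph V E" and s: "s \<in> profiles V" and "i \<in> V" "j \<in> V"
    and ui: "unhappy V E s i"
  shows "s i \<in> BR V E i (s(j := 3 - s j)) \<longleftrightarrow>
    E i j \<and> s j \<noteq> s i \<and> count_nbrs V E s i (3 - s i) \<le> count_nbrs V E s i (s i) + 2"
proof -
  have fin: "finite V" and irr: "\<not> E i i" using graph unfolding simple_graph_def by auto
  have si: "s i \<in> {1, 2}" and sj: "s j \<in> {1, 2}" using profiles_value[OF s] assms(3,4) by auto
  let ?t = "s(j := 3 - s j)"
  have br: "s i \<in> BR V E i ?t \<longleftrightarrow> count_nbrs V E ?t i (3 - s i) \<le> count_nbrs V E ?t i (s i)"
    using mem_BR_iff[where E = E and i = i, OF irr si] .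
  consider "\<not> E i j" | "E i j" "s j = s i" | "E i j" "s j = 3 - s i"
    using si sj by fastforce
  then show ?thesis
  proof cases
    case 1
    then show ?thesis
      using br ui count_nbrs_fun_upd_nonadj[where E = E and i = i and j = j, OF 1] unfolding unhappy_def by auto
  next
    case 2
    have "3 - s i \<noteq> s i" using si by auto
    then have "count_nbrs V E ?t i (s i) + 1 = count_nbrs V E s i (s i)"
      and "count_nbrs V E ?t i (3 - s i) = count_nbrs V E s i (3 - s i) + 1"
      using count_nbrs_fun_upd_adj[where E = E and i = i, OF fin \<open>j \<in> V\<close> \<open>E i j\<close>, of s "3 - s j" "s i"]
        count_nbrs_fun_upd_adj[where E = E and i = i, OF fin \<open>j \<in> V\<close> \<open>E i j\<close>, of s "3 - s j" "3 - s i"]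
        2(2) by simp_all
    then show ?thesis using br ui 2(2) unfolding unhappy_def by auto
  next
    case 3
    have "3 - s i \<noteq> s i" "3 - s j = s i" using si 3(2) by auto
    then have "count_nbrs V E ?t i (s i) = count_nbrs V E s i (s i) + 1"
      and "count_nbrs V E ?t i (3 - s i) + 1 = count_nbrs V E s i (3 - s i)"
      using count_nbrs_fun_upd_adj[where E = E and i = i, OF fin \<open>j \<in> V\<close> \<open>E i j\<close>, of s "3 - s j" "s i"]
        count_nbrs_fun_upd_adj[where E = E and i = i, OF fin \<open>j \<in> V\<close> \<open>E i j\<close>, of s "3 - s j" "3 - s i"]
        3(2) by simp_all
    then show ?thesis using br ui 3 unfolding unhappy_def by auto
  qed
qed

lemma ST_NE_iff:
  assumes graph: "simple_graph V E" and s: "s \<in> profiles V"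
  shows "s \<in> ST V E (NE V E) \<longleftrightarrow>
    (\<forall>i\<in>V. unhappy V E s i \<longrightarrow> (\<exists>j\<in>V. E i j \<and> s j \<noteq> s i \<and> unhappy V E s j \<and>
       count_nbrs V E s i (3 - s i) \<le> count_nbrs V E s i (s i) + 2))"
proof -
  have irr: "\<And>k. \<not> E k k" using graph unfolding simple_graph_def by auto
  have unh: "s k \<notin> BR V E k s \<longleftrightarrow> unhappy V E s k" if "k \<in> V" for k
    using not_mem_BR_iff_unhappy[where E = E and i = k and s = s, OF irr profiles_value[OF s that]] .
  have rescue: "(j \<noteq> i \<and> s j \<notin> BR V E j s \<and> (\<exists>x\<in>BR V E j s. s i \<in> BR V E i (s(j := x))))
      \<longleftrightarrow> E i j \<and> s j \<noteq> s i \<and> unhappy V E s j \<and>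
        count_nbrs V E s i (3 - s i) \<le> count_nbrs V E s i (s i) + 2"
    if "i \<in> V" "j \<in> V" "unhappy V E s i" for i j
  proof (cases "unhappy V E s j")
    case True
    then have "BR V E j s = {3 - s j}"
      using BR_unhappy[where E = E and i = j and s = s, OF irr profiles_value[OF s \<open>j \<in> V\<close>]] by blast
    then show ?thesis
      using True unh[OF \<open>j \<in> V\<close>] BR_after_switch_iff[OF graph s that] irr by auto
  qed (use unh[OF \<open>j \<in> V\<close>] in auto)
  show ?thesis
    unfolding ST_def using is_transition_NE[OF graph s] unh rescue by auto
qed

section \<open>Cycles\<close>

definition cycle_next :: "nat \<Rightarrow> nat \<Rightarrow> nat" where
  "cycle_next n i = (if Suc i = n then 0 else Suc i)"

definition cycle_prev :: "nat \<Rightarrow> nat \<Rightarrow> nat" where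
  "cycle_prev n i = (if i = 0 then n - 1 else i - 1)"

lemma cycle_next_prev:
  assumes "n \<ge> 3" "i < n"
  shows "cycle_next n i < n" "cycle_prev n i < n" "cycle_next n i \<noteq> cycle_prev n i"
    "cycle_next n i \<noteq> i" "cycle_prev n i \<noteq> i"
  using assms unfolding cycle_next_def cycle_prev_def by auto

lemma cycle_adj_iff:
  assumes "n \<ge> 3" "i < n"
  shows "cycle_adj n i j \<longleftrightarrow> j = cycle_next n i \<or> j = cycle_prev n i"
proof -
  have succ: "(k + 1) mod n = cycle_next n k" if "k < n" for k
    using that unfolding cycle_next_def by (auto simp: Suc_lessI)
  have "j < n \<and> i = cycle_next n j \<longleftrightarrow> j = cycle_prev n i"
    using assms unfolding cycle_next_def cycle_prev_def by auto
  then show ?thesis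
    using assms succ cycle_next_prev(1)[OF assms] unfolding cycle_adj_def by auto
qed

lemma simple_graph_cycle:
  assumes "n \<ge> 3"
  shows "simple_graph {..<n} (cycle_adj n)"
proof -
  have "\<not> cycle_adj n i i" for i
  proof
    assume adj: "cycle_adj n i i"
    then have "i < n" unfolding cycle_adj_def by simp
    then show False
      using adj cycle_adj_iff[OF assms \<open>i < n\<close>] cycle_next_prev(4,5)[OF assms \<open>i < n\<close>] by auto
  qed
  then show ?thesis unfolding simple_graph_def by (auto simp: cycle_adj_def)
qed

lemma card_filter_doubleton:
  assumes "x \<noteq> y"
  shows "card {j \<in> {x, y}. P j} = of_bool (P x) + of_bool (P y)"
proof -
  have "{j \<in> {x, y}. P j} = (if P x then {x} else {}) \<union> (if P y then {y} else {})" by auto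
  then show ?thesis using assms by (simp add: card_Un_disjoint)
qed

lemma count_nbrs_cycle:
  assumes "n \<ge> 3" "i < n"
  shows "count_nbrs {..<n} (cycle_adj n) s i a =
    of_bool (s (cycle_next n i) = a) + of_bool (s (cycle_prev n i) = a)"
proof -
  have "{j \<in> {..<n}. cycle_adj n i j \<and> s j = a} = {j \<in> {cycle_next n i, cycle_prev n i}. s j = a}"
    using cycle_adj_iff[OF assms] cycle_next_prev[OF assms] by auto
  then show ?thesis
    unfolding count_nbrs_def using card_filter_doubleton[OF cycle_next_prev(3)[OF assms]] by simp
qed

lemma unhappy_cycle_iff:
  assumes "n \<ge> 3" "i < n" "s \<in> profiles {..<n}"
  shows "unhappy {..<n} (cycle_adj n) s i \<longleftrightarrow> s (cycle_next n i) \<noteq> s i \<and> s (cycle_prev n i) \<noteq> s i"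
proof -
  have "s i \<in> {1, 2}" "s (cycle_next n i) \<in> {1, 2}" "s (cycle_prev n i) \<in> {1, 2}"
    using profiles_value[OF assms(3)] cycle_next_prev[OF assms(1,2)] assms(2) by auto
  then show ?thesis unfolding unhappy_def count_nbrs_cycle[OF assms(1,2)] by auto
qed

lemma card_edges_cycle:
  assumes "n \<ge> 3"
  shows "card (edges {..<n} (cycle_adj n)) = n"
proof -
  have "edges {..<n} (cycle_adj n) = (\<lambda>i. {i, cycle_next n i}) ` {..<n}"
  proof (intro set_eqI iffI)
    fix e assume "e \<in> edges {..<n} (cycle_adj n)"
    then obtain i j where e: "e = {i, j}" "i < n" "j < n" "cycle_adj n i j"
      unfolding edges_def by auto
    then consider "j = cycle_next n i" | "i = cycle_next n j"
      using cycle_adj_iff[OF assms e(2)] unfolding cycle_next_def cycle_prev_def by (auto split: if_splits)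
    then show "e \<in> (\<lambda>i. {i, cycle_next n i}) ` {..<n}"
      by cases (use e in auto)
  next
    fix e assume "e \<in> (\<lambda>i. {i, cycle_next n i}) ` {..<n}"
    then obtain i where i: "i < n" "e = {i, cycle_next n i}" by auto
    then have "cycle_next n i < n" "cycle_adj n i (cycle_next n i)"
      using cycle_adj_iff[OF assms] cycle_next_prev[OF assms] by auto
    then show "e \<in> edges {..<n} (cycle_adj n)"
      unfolding edges_def using i by blast
  qed
  moreover have "inj_on (\<lambda>i. {i, cycle_next n i}) {..<n}"
  proof (rule inj_onI)
    fix i k assume "i \<in> {..<n}" "k \<in> {..<n}" "{i, cycle_next n i} = {k, cycle_next n k}"
    then show "i = k"
      using assms unfolding cycle_next_def by (auto simp: doubleton_eq_iff split: if_splits)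
  qed
  ultimately show ?thesis by (simp add: card_image)
qed

definition alternating :: "nat \<Rightarrow> nat \<Rightarrow> nat" where
  "alternating n = restrict (\<lambda>k. if even k \<and> Suc k < n then 1 else 2) {..<n}"

lemma alternating_in_profiles: "alternating n \<in> profiles {..<n}"
  unfolding alternating_def by (rule restrict_in_profiles) auto

lemma unhappy_alternating_iff:
  assumes "n \<ge> 4" "i < n"
  shows "unhappy {..<n} (cycle_adj n) (alternating n) i \<longleftrightarrow> even n \<or> i + 2 < n"
proof -
  let ?s = "alternating n"
  have sv: "?s k = (if even k \<and> Suc k < n then 1 else 2)" if "k < n" for k
    using that unfolding alternating_def by auto
  have step: "?s (Suc k) \<noteq> ?s k \<longleftrightarrow> even n \<or> Suc (Suc k) \<noteq> n" if "Suc k < n" for k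
  proof (cases "even k")
    case True
    then show ?thesis using that sv[of k] sv[of "Suc k"] by auto
  next
    case False
    then have "Suc (Suc k) = n \<Longrightarrow> odd n" by auto
    then show ?thesis using False that sv[of k] sv[of "Suc k"] by auto
  qed
  have wrap: "?s 0 \<noteq> ?s (n - 1)" using assms(1) sv[of 0] sv[of "n - 1"] by auto
  have "?s (cycle_next n i) \<noteq> ?s i \<longleftrightarrow> Suc i = n \<or> even n \<or> Suc (Suc i) \<noteq> n"
    using assms(2) step[of i] wrap unfolding cycle_next_def by auto
  moreover have "?s (cycle_prev n i) \<noteq> ?s i \<longleftrightarrow> i = 0 \<or> even n \<or> Suc i \<noteq> n"
    using assms(2) step[of "i - 1"] wrap unfolding cycle_prev_def by auto
  ultimately have "?s (cycle_next n i) \<noteq> ?s i \<and> ?s (cycle_prev n i) \<noteq> ?s i \<longleftrightarrow> even n \<or> i + 2 < n"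
    using assms by (cases "even n") (simp_all, arith)
  then show ?thesis using unhappy_cycle_iff[OF _ assms(2) alternating_in_profiles] assms(1) by simp
qed

lemma alternating_in_ST_minus_NE:
  assumes n: "n \<ge> 4"
  shows "alternating n \<in> ST {..<n} (cycle_adj n) (NE {..<n} (cycle_adj n)) - NE {..<n} (cycle_adj n)"
proof -
  have n3: "n \<ge> 3" using n by simp
  let ?s = "alternating n"
  have "?s \<in> ST {..<n} (cycle_adj n) (NE {..<n} (cycle_adj n))"
    unfolding ST_NE_iff[OF simple_graph_cycle[OF n3] alternating_in_profiles]
  proof (intro ballI impI)
    fix i assume "i \<in> {..<n}" and unh: "unhappy {..<n} (cycle_adj n) ?s i"
    then have i: "i < n" by simp
    define j where "j = (if i = 0 then cycle_next n i else cycle_prev n i)"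
    have "j < n" "cycle_adj n i j"
      using cycle_next_prev[OF n3 i] cycle_adj_iff[OF n3 i] unfolding j_def by auto
    moreover have "?s j \<noteq> ?s i"
      using unh unhappy_cycle_iff[OF n3 i alternating_in_profiles] unfolding j_def by auto
    moreover have "unhappy {..<n} (cycle_adj n) ?s j"
      using unh unhappy_alternating_iff[OF n i] unhappy_alternating_iff[OF n \<open>j < n\<close>] n
      unfolding j_def cycle_next_def cycle_prev_def by auto
    moreover have "count_nbrs {..<n} (cycle_adj n) ?s i (3 - ?s i) \<le> 2"
      unfolding count_nbrs_cycle[OF n3 i] by simp
    ultimately show "\<exists>j\<in>{..<n}. cycle_adj n i j \<and> ?s j \<noteq> ?s i \<and> unhappy {..<n} (cycle_adj n) ?s j \<and>
        count_nbrs {..<n} (cycle_adj n) ?s i (3 - ?s i) \<le> count_nbrs {..<n} (cycle_adj n) ?s i (?s i) + 2"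
      by auto
  qed
  moreover have "unhappy {..<n} (cycle_adj n) ?s 0" using unhappy_alternating_iff[of n 0] n by simp
  then have "?s \<notin> NE {..<n} (cycle_adj n)"
    using NE_iff_no_unhappy[OF simple_graph_cycle[OF n3] alternating_in_profiles] n by auto
  ultimately show ?thesis by blast
qed

lemma sw_alternating_even:
  assumes "n \<ge> 4" "even n"
  shows "sw {..<n} (cycle_adj n) (alternating n) = 0"
proof -
  have "util {..<n} (cycle_adj n) i (alternating n) = 0" if "i < n" for i
    using unhappy_alternating_iff[OF assms(1) that] assms
      unhappy_cycle_iff[OF _ that alternating_in_profiles] count_nbrs_cycle[OF _ that]
    unfolding util_eq_count_nbrs by simp
  then show ?thesis unfolding sw_def by simp
qed

section \<open>Complete graphs\<close>

lemma simple_graph_complete: "simple_graph {..<n} (complete_adj n)"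
  unfolding simple_graph_def complete_adj_def by auto

lemma count_nbrs_complete:
  assumes "i < n"
  shows "count_nbrs {..<n} (complete_adj n) s i a = card {k \<in> {..<n}. s k = a} - of_bool (s i = a)"
proof -
  have "{j \<in> {..<n}. complete_adj n i j \<and> s j = a} = {k \<in> {..<n}. s k = a} - {i}"
    unfolding complete_adj_def using assms by auto
  then show ?thesis unfolding count_nbrs_def using assms by (simp add: card_Diff_singleton_if)
qed

lemma card_strategy_classes:
  assumes "finite V" "s \<in> profiles V" "a \<in> {1, 2}"
  shows "card {k \<in> V. s k = a} + card {k \<in> V. s k = 3 - a} = card V"
proof -
  have "{k \<in> V. s k = a} \<union> {k \<in> V. s k = 3 - a} = V"
    using assms(3) profiles_value[OF assms(2)] by fastforce
  moreover have "{k \<in> V. s k = a} \<inter> {k \<in> V. s k = 3 - a} = {}" using assms(3) by auto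
  ultimately show ?thesis
    using assms(1) card_Un_disjoint[of "{k \<in> V. s k = a}" "{k \<in> V. s k = 3 - a}"] by simp
qed

lemma complete_odd_ST_subset_NE:
  assumes "odd n"
  shows "ST {..<n} (complete_adj n) (NE {..<n} (complete_adj n)) \<subseteq> NE {..<n} (complete_adj n)"
proof
  fix s assume st: "s \<in> ST {..<n} (complete_adj n) (NE {..<n} (complete_adj n))"
  then have s: "s \<in> profiles {..<n}" unfolding ST_def is_transition_def by auto
  note ST_iff = ST_NE_iff[OF simple_graph_complete s]
  show "s \<in> NE {..<n} (complete_adj n)"
  proof (rule ccontr)
    assume "s \<notin> NE {..<n} (complete_adj n)"
    then obtain i where i: "i < n" "unhappy {..<n} (complete_adj n) s i"
      using NE_iff_no_unhappy[OF simple_graph_complete s] by auto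
    then obtain j where j: "j < n" "s j \<noteq> s i" "unhappy {..<n} (complete_adj n) s j"
      using st ST_iff by auto
    have si: "s i \<in> {1, 2}" and "s j \<in> {1, 2}" using profiles_value[OF s] i j by auto
    then have sj: "s j = 3 - s i" "3 - s j = s i" using j(2) by auto
    define a where "a = card {k \<in> {..<n}. s k = s i}"
    define b where "b = card {k \<in> {..<n}. s k = 3 - s i}"
    have "a + b = n" using card_strategy_classes[OF _ s si] unfolding a_def b_def by simp
    moreover have "a \<ge> 1" "b \<ge> 1"
      using i(1) j(1) sj(1) unfolding a_def b_def by (auto simp: Suc_le_eq card_gt_0_iff)
    moreover have "a - 1 < b" "b - 1 < a"
      using i j count_nbrs_complete[OF i(1), of s] count_nbrs_complete[OF j(1), of s] sj si
      unfolding unhappy_def a_def b_def by auto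
    ultimately show False using assms by presburger
  qed
qed

definition halves :: "nat \<Rightarrow> nat \<Rightarrow> nat" where
  "halves n = restrict (\<lambda>k. if k < n div 2 then 1 else 2) {..<n}"

lemma halves_in_ST_minus_NE:
  assumes "even n" "n > 0"
  shows "halves n \<in> ST {..<n} (complete_adj n) (NE {..<n} (complete_adj n)) - NE {..<n} (complete_adj n)"
proof -
  define h where "h = n div 2"
  have n: "n = 2 * h" "h \<ge> 1" using assms unfolding h_def by auto
  let ?s = "halves n"
  have s: "?s \<in> profiles {..<n}" unfolding halves_def by (rule restrict_in_profiles) auto
  have sv: "?s k = (if k < h then 1 else 2)" if "k < n" for k
    using that unfolding halves_def h_def by auto
  have "{k \<in> {..<n}. ?s k = 1} = {..<h}" "{k \<in> {..<n}. ?s k = 2} = {h..<n}"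
    using sv n by (auto split: if_splits)
  then have c: "card {k \<in> {..<n}. ?s k = 1} = h" "card {k \<in> {..<n}. ?s k = 2} = h"
    using n by auto
  have cnt: "count_nbrs {..<n} (complete_adj n) ?s i (?s i) = h - 1"
    "count_nbrs {..<n} (complete_adj n) ?s i (3 - ?s i) = h" if "i < n" for i
    using count_nbrs_complete[OF that, of ?s] c sv[OF that] by auto
  then have unh: "unhappy {..<n} (complete_adj n) ?s i" if "i < n" for i
    using that n unfolding unhappy_def by auto
  have "?s \<in> ST {..<n} (complete_adj n) (NE {..<n} (complete_adj n))"
    unfolding ST_NE_iff[OF simple_graph_complete s]
  proof (intro ballI impI)
    fix i assume "i \<in> {..<n}"
    then have i: "i < n" by simp
    define j where "j = (if i < h then n - 1 else 0)"
    have "j < n" "j \<noteq> i" "?s j \<noteq> ?s i" using n i sv[OF i] sv[of j] unfolding j_def by auto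
    then show "\<exists>j\<in>{..<n}. complete_adj n i j \<and> ?s j \<noteq> ?s i \<and> unhappy {..<n} (complete_adj n) ?s j \<and>
        count_nbrs {..<n} (complete_adj n) ?s i (3 - ?s i)
          \<le> count_nbrs {..<n} (complete_adj n) ?s i (?s i) + 2"
      using i unh[of j] cnt[OF i] unfolding complete_adj_def by (intro bexI[of _ j]) simp_all
  qed
  moreover have "?s \<notin> NE {..<n} (complete_adj n)"
    using NE_iff_no_unhappy[OF simple_graph_complete s] unh assms(2) by blast
  ultimately show ?thesis by blast
qed

lemma complete_ST_minus_NE_nonempty_iff:
  assumes "n > 0"
  shows "ST {..<n} (complete_adj n) (NE {..<n} (complete_adj n)) - NE {..<n} (complete_adj n) \<noteq> {}
    \<longleftrightarrow> even n"
  using complete_odd_ST_subset_NE[of n] halves_in_ST_minus_NE[of n] assms by blast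

section \<open>Forests\<close>

definition pendant :: "('a \<Rightarrow> 'a \<Rightarrow> bool) \<Rightarrow> 'a \<Rightarrow> 'a \<Rightarrow> bool" where
  "pendant E x w \<longleftrightarrow> E x w \<and> (\<forall>z. E w z \<longrightarrow> z = x)"

lemma pendant_in_V: "simple_graph V E \<Longrightarrow> pendant E x w \<Longrightarrow> w \<in> V"
  unfolding pendant_def simple_graph_def by blast

lemma count_nbrs_pendant:
  assumes graph: "simple_graph V E" and w: "pendant E x w"
  shows "count_nbrs V E s w a = of_bool (s x = a)"
proof -
  have "E w j \<longleftrightarrow> j = x" for j
    using w graph unfolding pendant_def simple_graph_def by blast
  moreover have "x \<in> V" using w graph unfolding pendant_def simple_graph_def by blast
  ultimately have "{j \<in> V. E w j \<and> s j = a} = (if s x = a then {x} else {})" by auto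
  then show ?thesis unfolding count_nbrs_def by simp
qed

definition star_profile :: "'a set \<Rightarrow> ('a \<Rightarrow> 'a \<Rightarrow> bool) \<Rightarrow> 'a \<Rightarrow> 'a set \<Rightarrow> 'a \<Rightarrow> nat" where
  "star_profile V E x P = restrict (\<lambda>w. if w = x \<or> pendant E x w \<and> w \<notin> P then 1 else 2) V"

lemma star_profile_in_profiles: "star_profile V E x P \<in> profiles V"
  unfolding star_profile_def by (rule restrict_in_profiles) auto

lemma star_profile_centre: "x \<in> V \<Longrightarrow> star_profile V E x P x = 1"
  unfolding star_profile_def by simp

lemma star_profile_pendant:
  assumes "simple_graph V E" "pendant E x w"
  shows "star_profile V E x P w = (if w \<in> P then 2 else 1)"
proof -
  have "w \<noteq> x" using assms unfolding pendant_def simple_graph_def by auto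
  then show ?thesis using assms(2) pendant_in_V[OF assms] unfolding star_profile_def by auto
qed

lemma unhappy_star_profile_pendant:
  assumes "simple_graph V E" "pendant E x w"
  shows "unhappy V E (star_profile V E x P) w \<longleftrightarrow> w \<in> P"
proof -
  have "x \<in> V" using assms unfolding pendant_def simple_graph_def by blast
  then show ?thesis
    using count_nbrs_pendant[OF assms] star_profile_pendant[OF assms] star_profile_centre[of x V E P]
    unfolding unhappy_def by (cases "w \<in> P") simp_all
qed

lemma not_unhappy_star_profile_off_star:
  assumes graph: "simple_graph V E" and w: "w \<in> V" "w \<noteq> x" "\<not> pendant E x w"
  shows "\<not> unhappy V E (star_profile V E x P) w"
proof -
  let ?s = "star_profile V E x P"
  have sym: "\<And>a b. E a b \<Longrightarrow> E b a" and inV: "\<And>a b. E a b \<Longrightarrow> b \<in> V" and fin: "finite V"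
    using graph unfolding simple_graph_def by auto
  have sw: "?s w = 2" using w unfolding star_profile_def by auto
  have ones: "{j \<in> V. E w j \<and> ?s j = 1} \<subseteq> {x}"
    using w sym unfolding star_profile_def pendant_def by (auto split: if_splits)
  show ?thesis
  proof (cases "E w x")
    case True
    then obtain z where z: "E w z" "z \<noteq> x" using w(3) sym unfolding pendant_def by auto
    then have "\<not> pendant E x z" using w(2) sym unfolding pendant_def by auto
    then have "{z} \<subseteq> {j \<in> V. E w j \<and> ?s j = 2}" using z inV unfolding star_profile_def by auto
    then have "count_nbrs V E ?s w 2 \<ge> 1"
      unfolding count_nbrs_def using fin card_mono[of _ "{z}"] by fastforce
    moreover have "count_nbrs V E ?s w 1 \<le> 1"
      unfolding count_nbrs_def using card_mono[OF _ ones] by simp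
    ultimately show ?thesis using sw unfolding unhappy_def by simp
  next
    case False
    then have none: "{j \<in> V. E w j \<and> ?s j = 1} = {}" using ones by auto
    have "count_nbrs V E ?s w 1 = 0" unfolding count_nbrs_def none by simp
    then show ?thesis using sw unfolding unhappy_def by simp
  qed
qed

lemma count_nbrs_star_profile_centre:
  assumes graph: "simple_graph V E" and P: "P \<subseteq> {w. pendant E x w}"
  shows "count_nbrs V E (star_profile V E x P) x 1 = card {w. pendant E x w} - card P"
    and "count_nbrs V E (star_profile V E x P) x 2 = card P + card {w \<in> V. E x w \<and> \<not> pendant E x w}"
proof -
  let ?s = "star_profile V E x P"
  let ?L = "{w. pendant E x w}" and ?R = "{w \<in> V. E x w \<and> \<not> pendant E x w}"
  have irr: "\<not> E x x" and fin: "finite V" using graph unfolding simple_graph_def by auto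
  have finL: "finite ?L" using fin pendant_in_V[OF graph] by (auto intro: finite_subset)
  have "{j \<in> V. E x j \<and> ?s j = 1} = ?L - P"
    using P irr pendant_in_V[OF graph] unfolding star_profile_def pendant_def by auto
  then show "count_nbrs V E ?s x 1 = card ?L - card P"
    unfolding count_nbrs_def using P finL by (simp add: card_Diff_subset finite_subset)
  have "{j \<in> V. E x j \<and> ?s j = 2} = P \<union> ?R"
    using P irr pendant_in_V[OF graph] unfolding star_profile_def pendant_def by auto
  moreover have "P \<inter> ?R = {}" using P by auto
  ultimately show "count_nbrs V E ?s x 2 = card P + card ?R"
    unfolding count_nbrs_def using P finL fin by (simp add: card_Un_disjoint finite_subset)
qed

lemma star_profile_in_ST_minus_NE:
  assumes graph: "simple_graph V E" and centre: "x \<in> V" and P: "P \<subseteq> {w. pendant E x w}" "P \<noteq> {}"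
    and outvoted: "count_nbrs V E (star_profile V E x P) x 1 < count_nbrs V E (star_profile V E x P) x 2"
      "count_nbrs V E (star_profile V E x P) x 2 \<le> count_nbrs V E (star_profile V E x P) x 1 + 2"
  shows "star_profile V E x P \<in> ST V E (NE V E) - NE V E"
proof -
  let ?s = "star_profile V E x P"
  have sym: "\<And>a b. E a b \<Longrightarrow> E b a" using graph unfolding simple_graph_def by auto
  have s: "?s \<in> profiles V" by (rule star_profile_in_profiles)
  have sx: "?s x = 1" using star_profile_centre[OF centre] .
  then have ux: "unhappy V E ?s x" using outvoted unfolding unhappy_def by simp
  obtain q where q: "q \<in> P" using P(2) by blast
  have "?s \<in> ST V E (NE V E)"
    unfolding ST_NE_iff[OF graph s]
  proof (intro ballI impI)
    fix i assume "i \<in> V" "unhappy V E ?s i"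
    then consider "i = x" | "i \<in> P"
      using not_unhappy_star_profile_off_star[OF graph] unhappy_star_profile_pendant[OF graph] by blast
    then show "\<exists>j\<in>V. E i j \<and> ?s j \<noteq> ?s i \<and> unhappy V E ?s j \<and>
        count_nbrs V E ?s i (3 - ?s i) \<le> count_nbrs V E ?s i (?s i) + 2"
    proof cases
      case 1
      have "pendant E x q" using P(1) q by blast
      then have "q \<in> V" "E x q" "?s q = 2" "unhappy V E ?s q"
        using pendant_in_V[OF graph] star_profile_pendant[OF graph] unhappy_star_profile_pendant[OF graph] q
        unfolding pendant_def by auto
      then show ?thesis using 1 sx outvoted by auto
    next
      case 2
      then have "pendant E x i" using P(1) by blast
      then have "E i x" "?s i = 2" "count_nbrs V E ?s i (3 - ?s i) \<le> 1"
        using sym star_profile_pendant[OF graph] count_nbrs_pendant[OF graph] 2 unfolding pendant_def by auto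
      then show ?thesis using centre sx ux by auto
    qed
  qed
  moreover have "?s \<notin> NE V E" using NE_iff_no_unhappy[OF graph s] centre ux by blast
  ultimately show ?thesis by blast
qed

lemma ST_minus_NE_nonempty_if_pendant_star:
  assumes graph: "simple_graph V E" and centre: "x \<in> V" and "pendant E x l"
    and star: "\<forall>w. E x w \<longrightarrow> w = r \<or> pendant E x w"
  shows "ST V E (NE V E) - NE V E \<noteq> {}"
proof -
  let ?L = "{w. pendant E x w}" and ?R = "{w \<in> V. E x w \<and> \<not> pendant E x w}"
  have "finite ?L"
    using graph pendant_in_V[OF graph] unfolding simple_graph_def by (auto intro: finite_subset)
  then have "card ?L \<ge> 1" using \<open>pendant E x l\<close> by (auto simp: Suc_le_eq card_gt_0_iff)
  moreover have "card ?R \<le> 1" using star card_mono[of "{r}" ?R] by fastforce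
  \<comment> \<open>just enough pendants switch to 2 to outvote x\<close>
  ultimately obtain p where p: "1 \<le> p" "p \<le> card ?L"
    "card ?L - p < p + card ?R" "p + card ?R \<le> card ?L - p + 2"
    by (intro that[of "(card ?L - card ?R) div 2 + 1"]) presburger+
  obtain P where P: "P \<subseteq> ?L" "card P = p"
    using obtain_subset_with_card_n[OF p(2)] by blast
  moreover have "P \<noteq> {}" using P(2) p(1) by auto
  ultimately have "star_profile V E x P \<in> ST V E (NE V E) - NE V E"
    using star_profile_in_ST_minus_NE[OF graph centre] count_nbrs_star_profile_centre[OF graph] p by simp
  then show ?thesis by blast
qed

definition is_path :: "'a set \<Rightarrow> ('a \<Rightarrow> 'a \<Rightarrow> bool) \<Rightarrow> 'a list \<Rightarrow> bool" where
  "is_path V E P \<longleftrightarrow> distinct P \<and> set P \<subseteq> V \<and> (\<forall>k. Suc k < length P \<longrightarrow> E (P ! k) (P ! Suc k))"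

lemma is_path_drop: "is_path V E P \<Longrightarrow> is_path V E (drop a P)"
  unfolding is_path_def by (auto dest: in_set_dropD simp: add.commute)

lemma is_path_Cons:
  assumes "is_path V E P" "P \<noteq> []" "y \<in> V" "y \<notin> set P" "E y (P ! 0)"
  shows "is_path V E (y # P)"
  using assms unfolding is_path_def by (auto simp: nth_Cons split: nat.split)

lemma ex_longest_path:
  assumes "finite V" "is_path V E P\<^sub>0"
  obtains P where "is_path V E P" "length P\<^sub>0 \<le> length P" "\<And>Q. is_path V E Q \<Longrightarrow> length Q \<le> length P"
proof -
  have "length Q < card V + 1" if "is_path V E Q" for Q
  proof -
    have "distinct Q" "set Q \<subseteq> V" using that unfolding is_path_def by auto
    then have "length Q \<le> card V" using card_mono[OF assms(1)] distinct_card by metis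
    then show ?thesis by simp
  qed
  then obtain P where "is_path V E P" "\<And>Q. is_path V E Q \<Longrightarrow> length Q \<le> length P"
    using Lattices_Big.ex_has_greatest_nat[of "is_path V E" P\<^sub>0 length "card V + 1"] assms(2) by blast
  then show ?thesis using that assms(2) by blast
qed

lemma has_cycle_if_closing_edge:
  assumes P: "is_path V E P" and b: "2 \<le> b" "b < length P" and E: "E (P ! b) (P ! 0)"
  shows "has_cycle V E"
proof -
  let ?C = "take (Suc b) P"
  have len: "length ?C = Suc b" using b by simp
  have "E (?C ! k) (?C ! (Suc k mod Suc b))" if "k < Suc b" for k
  proof (cases "k = b")
    case True
    then show ?thesis using E b by simp
  next
    case False
    then show ?thesis using P that b unfolding is_path_def by simp
  qed
  moreover have "distinct ?C" "set ?C \<subseteq> V" using P unfolding is_path_def by (auto dest: in_set_takeD)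
  ultimately show ?thesis
    unfolding has_cycle_def using len b by (intro exI[of _ ?C]) auto
qed

lemma longest_path_starts_with_pendant:
  assumes graph: "simple_graph V E" and acyclic: "\<not> has_cycle V E"
    and P: "is_path V E P" "2 \<le> length P" and longest: "\<And>Q. is_path V E Q \<Longrightarrow> length Q \<le> length P"
  shows "pendant E (P ! 1) (P ! 0)"
  unfolding pendant_def
proof (intro conjI allI impI)
  have sym: "\<And>a b. E a b \<Longrightarrow> E b a" and irr: "\<And>a. \<not> E a a" and inV: "\<And>a b. E a b \<Longrightarrow> b \<in> V"
    using graph unfolding simple_graph_def by auto
  show "E (P ! 1) (P ! 0)" using P sym unfolding is_path_def by auto
  fix z assume z: "E (P ! 0) z"
  show "z = P ! 1"
  proof (cases "z \<in> set P")
    case False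
    moreover have "P \<noteq> []" using P(2) by auto
    ultimately have "is_path V E (z # P)" using is_path_Cons[OF P(1)] z sym inV by blast
    then show ?thesis using longest by fastforce
  next
    case True
    then obtain m where m: "m < length P" "z = P ! m" by (auto simp: in_set_conv_nth)
    then have "m \<noteq> 0" using z irr by (cases m) auto
    moreover have "\<not> 2 \<le> m" using has_cycle_if_closing_edge[OF P(1) _ m(1)] z m(2) sym acyclic by blast
    ultimately have "m = 1" by linarith
    then show ?thesis using m by simp
  qed
qed

lemma longest_path_second_vertex_nbr:
  assumes graph: "simple_graph V E" and acyclic: "\<not> has_cycle V E"
    and P: "is_path V E P" "2 \<le> length P" and longest: "\<And>Q. is_path V E Q \<Longrightarrow> length Q \<le> length P"
    and w: "E (P ! 1) w"
  shows "w = P ! 2 \<or> pendant E (P ! 1) w"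
proof (cases "w \<in> set P")
  case True
  have sym: "\<And>a b. E a b \<Longrightarrow> E b a" and irr: "\<And>a. \<not> E a a"
    using graph unfolding simple_graph_def by auto
  obtain m where m: "m < length P" "w = P ! m" using True by (auto simp: in_set_conv_nth)
  have "m \<noteq> 1" using w m irr by auto
  moreover have "\<not> 3 \<le> m"
  proof
    assume "3 \<le> m"
    then have "E (drop 1 P ! (m - 1)) (drop 1 P ! 0)" using w m sym by simp
    moreover have "2 \<le> m - 1" "m - 1 < length (drop 1 P)" using \<open>3 \<le> m\<close> m by auto
    ultimately show False
      using has_cycle_if_closing_edge[OF is_path_drop[OF P(1), of 1]] acyclic by blast
  qed
  ultimately have "m = 0 \<or> m = 2" by auto
  then show ?thesis using m longest_path_starts_with_pendant[OF graph acyclic P longest] by auto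
next
  case False
  \<comment> \<open>replacing the first vertex by w gives another longest path\<close>
  let ?Q = "w # drop 1 P"
  have "w \<in> V" "E w (P ! 1)" using w graph unfolding simple_graph_def by auto
  moreover have "w \<notin> set (drop 1 P)" using False by (auto dest: in_set_dropD)
  ultimately have Q: "is_path V E ?Q"
    using is_path_Cons[OF is_path_drop[OF P(1), of 1]] P(2) by auto
  have "length ?Q = length P" using P(2) by auto
  then have "pendant E (?Q ! 1) (?Q ! 0)"
    using longest_path_starts_with_pendant[OF graph acyclic Q] P(2) longest by simp
  then show ?thesis using P(2) by simp
qed

lemma forest_has_pendant_star:
  assumes "forest V E" "E i j"
  shows "\<exists>x\<in>V. \<exists>l r. pendant E x l \<and> (\<forall>w. E x w \<longrightarrow> w = r \<or> pendant E x w)"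
proof -
  have graph: "simple_graph V E" and acyclic: "\<not> has_cycle V E" using assms(1) unfolding forest_def by auto
  have "finite V" and edge: "is_path V E [i, j]"
    using graph assms(2) unfolding simple_graph_def is_path_def by (auto simp: less_Suc_eq)
  then obtain P where P: "is_path V E P" "length [i, j] \<le> length P"
    and longest: "\<And>Q. is_path V E Q \<Longrightarrow> length Q \<le> length P"
    using ex_longest_path by blast
  then have P: "is_path V E P" "2 \<le> length P" by simp_all
  then have "P ! 1 \<in> V" unfolding is_path_def by auto
  then show ?thesis
    using longest_path_starts_with_pendant[OF graph acyclic P longest]
      longest_path_second_vertex_nbr[OF graph acyclic P longest] by blast
qed

lemma forest_ST_minus_NE_nonempty:
  assumes "forest V E" "E i j"
  shows "ST V E (NE V E) - NE V E \<noteq> {}"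
proof -
  have graph: "simple_graph V E" using assms(1) unfolding forest_def by simp
  obtain x l r where "x \<in> V" "pendant E x l" "\<forall>w. E x w \<longrightarrow> w = r \<or> pendant E x w"
    using forest_has_pendant_star[OF assms] by blast
  then show ?thesis by (rule ST_minus_NE_nonempty_if_pendant_star[OF graph])
qed

theorem theorem5:
  shows "(\<forall>n::nat. n \<ge> 4 \<longrightarrow>
            ST {..<n} (cycle_adj n) (NE {..<n} (cycle_adj n)) - NE {..<n} (cycle_adj n) \<noteq> {}
          \<and> (even n \<longrightarrow> (\<exists>s \<in> ST {..<n} (cycle_adj n) (NE {..<n} (cycle_adj n)) - NE {..<n} (cycle_adj n).
                int (sw {..<n} (cycle_adj n) s)
                  = int (card (edges {..<n} (cycle_adj n))) - int (card {..<n})))) \<and>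
         (\<forall>n::nat. n \<ge> 1 \<longrightarrow>
            (ST {..<n} (complete_adj n) (NE {..<n} (complete_adj n)) - NE {..<n} (complete_adj n) \<noteq> {}
             \<longleftrightarrow> even n)) \<and>
         (\<forall>(V :: 'a set) E. forest V E \<and> (\<exists>i j. E i j) \<longrightarrow>
            ST V E (NE V E) - NE V E \<noteq> {})"
proof -
  have cycle: "alternating n \<in> ST {..<n} (cycle_adj n) (NE {..<n} (cycle_adj n)) - NE {..<n} (cycle_adj n)"
    "even n \<Longrightarrow> int (sw {..<n} (cycle_adj n) (alternating n))
      = int (card (edges {..<n} (cycle_adj n))) - int (card {..<n})" if "n \<ge> 4" for n
    using alternating_in_ST_minus_NE[OF that] sw_alternating_even[OF that] card_edges_cycle that by simp_all
  show ?thesis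
    using cycle complete_ST_minus_NE_nonempty_iff forest_ST_minus_NE_nonempty
    by (metis (no_types) empty_iff not_one_le_zero gr0I)
qed

end
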